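(* Let $r,n\ge1$, $\gcd(a,b)=1$, and $T=\{(t^{-p},t^{-q})\}\subset(\mathbb{C}^* )^2$ with generic integers $p\gg q>0$. For every $\lambda\in B^r_{a,b;n}$, the dimension of the subspace $T^+_\lambda H^r_{a,b;n}$ of the tangent space to $H^r_{a,b;n}$ at $I_\lambda$ on which $T$ acts with positive weight equals the Betti statistic $\beta(\lambda)$.
   Context: $G_{a,b;n}$ is the cyclic group generated by $\mathrm{diag}(\zeta^a,\zeta^b)$, $\zeta$ a primitive $n$-th root of unity, acting on $\mathbb{C}[x,y]$ by $(x,y)\mapsto(\zeta^ax,\zeta^by)$; $H^r_{a,b;n}$ is the moduli scheme of $G_{a,b;n}$-invariant ideals $I$ with $\mathbb{C}[x,y]/I\cong\mathbb{C}[G_{a,b;n}]^r$; $(\mathbb{C}^* )^2$ acts by $(t_1,t_2)\cdot I=\{f(t_1x,t_2y):f\in I\}$. Partitions are Young diagrams $\lambda\subset\mathbb{Z}_{\ge0}^2$; $I_\lambda$ is generated by $x^iy^j$ for $(i,j)\notin\lambda$; $l(j)=\#\{i:(i,j)\in\lambda\}$, $c(i)=\#\{j:(i,j)\in\lambda\}$; box $(i,j)$ has color $ai+bj\bmod n$; $B^r_{a,b;n}$ is the set of partitions of $rn$ in which each color occurs exactly $r$ times. An arrow from $(l,s)$ to $(i',j')$ is invariant if $a(l-i')+b(s-j')\equiv0\pmod n$; $d_{i,j}$ is the arrow from $(l(j),j)$ to $(i,c(i)-1)$, $u_{i,j}$ the arrow from $(i,c(i))$ to $(l(j)-1,j)$;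 $\beta(\lambda)=\#\{(i,j)\in\lambda:d_{i,j}\text{ invariant}\}+\#\{(i,j)\in\lambda:u_{i,j}\text{ invariant and } i=l(j)-1\}$. *)

theory Defs
  imports Complex_Main "HOL-Library.Function_Algebras"
begin

type_synonym box = "nat \<times> nat"

definition young :: "box set \<Rightarrow> bool" where
  "young Y \<longleftrightarrow> finite Y \<and>
     (\<forall>i j i' j'. (i, j) \<in> Y \<and> i' \<le> i \<and> j' \<le> j \<longrightarrow> (i', j') \<in> Y)"

definition color :: "int \<Rightarrow> int \<Rightarrow> nat \<Rightarrow> box \<Rightarrow> int" where
  "color a b n p = (a * int (fst p) + b * int (snd p)) mod int n"

definition Bset :: "nat \<Rightarrow> int \<Rightarrow> int \<Rightarrow> nat \<Rightarrow> box set set" where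
  "Bset r a b n = {Y. young Y \<and> card Y = r * n \<and>
      (\<forall>k::int. 0 \<le> k \<and> k < int n \<longrightarrow> card {p \<in> Y. color a b n p = k} = r)}"

definition rowlen :: "box set \<Rightarrow> nat \<Rightarrow> nat" where
  "rowlen Y j = card {i. (i, j) \<in> Y}"

definition collen :: "box set \<Rightarrow> nat \<Rightarrow> nat" where
  "collen Y i = card {j. (i, j) \<in> Y}"

definition inv_arrow :: "int \<Rightarrow> int \<Rightarrow> nat \<Rightarrow> int \<times> int \<Rightarrow> int \<times> int \<Rightarrow> bool" where
  "inv_arrow a b n s t \<longleftrightarrow> (a * (fst s - fst t) + b * (snd s - snd t)) mod int n = 0"

definition betti :: "int \<Rightarrow> int \<Rightarrow> nat \<Rightarrow> box set \<Rightarrow> nat" where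
  "betti a b n Y =
     card {(i, j) \<in> Y. inv_arrow a b n (int (rowlen Y j), int j)
                                       (int i, int (collen Y i) - 1)}
   + card {(i, j) \<in> Y. inv_arrow a b n (int i, int (collen Y i))
                                       (int (rowlen Y j) - 1, int j)
                      \<and> int i = int (rowlen Y j) - 1}"

text \<open>Tangent space to H^r_{a,b;n} at I_lambda: the space Hom_{C[x,y]}(I_lambda, C[x,y]/I_lambda)^G.
  A C-linear map phi : I_lambda \<rightarrow> C[x,y]/I_lambda is recorded by its matrix M with respect to the
  monomial basis {x^m : m \<notin> lambda} of I_lambda and the monomial basis {x^k : k \<in> lambda} of
  C[x,y]/I_lambda: M m k = coefficient of x^k in phi(x^m) (M vanishes off these index sets).
  C[x,y]-linearity means phi commutes with multiplication by x and by y; G-equivariance means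
  that phi maps the zeta^c-eigenspace to the zeta^c-eigenspace, i.e. nonzero entries connect
  monomials of equal color.\<close>
definition tangent_space :: "int \<Rightarrow> int \<Rightarrow> nat \<Rightarrow> box set \<Rightarrow> (box \<Rightarrow> box \<Rightarrow> complex) set" where
  "tangent_space a b n Y = {M.
     (\<forall>m k. M m k \<noteq> 0 \<longrightarrow> m \<notin> Y \<and> k \<in> Y) \<and>
     (\<forall>m k. m \<notin> Y \<and> k \<in> Y \<longrightarrow>
        M (fst m + 1, snd m) k = (if fst k \<ge> 1 then M m (fst k - 1, snd k) else 0)) \<and>
     (\<forall>m k. m \<notin> Y \<and> k \<in> Y \<longrightarrow>
        M (fst m, snd m + 1) k = (if snd k \<ge> 1 then M m (fst k, snd k - 1) else 0)) \<and>
     (\<forall>m k. M m k \<noteq> 0 \<longrightarrow> color a b n m = color a b n k)}"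

text \<open>The torus (t1,t2) acts on the tangent vector M by (t.M) m k = t1^(k1-m1) t2^(k2-m2) M m k
  (induced by (t.I) = {f(t1 x, t2 y)}).  Along T = {(t^-p, t^-q)} the entry (m,k) thus has
  weight -(p(k1-m1) + q(k2-m2)).\<close>
definition T_weight :: "int \<Rightarrow> int \<Rightarrow> box \<Rightarrow> box \<Rightarrow> int" where
  "T_weight p q m k = - (p * (int (fst k) - int (fst m)) + q * (int (snd k) - int (snd m)))"

text \<open>T^+_lambda H: the sum of the positive T-weight spaces of the tangent space.\<close>
definition tangent_pos :: "int \<Rightarrow> int \<Rightarrow> nat \<Rightarrow> int \<Rightarrow> int \<Rightarrow> box set \<Rightarrow> (box \<Rightarrow> box \<Rightarrow> complex) set" where
  "tangent_pos a b n p q Y =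
     {M \<in> tangent_space a b n Y. \<forall>m k. M m k \<noteq> 0 \<longrightarrow> T_weight p q m k > 0}"

definition mscale :: "complex \<Rightarrow> (box \<Rightarrow> box \<Rightarrow> complex) \<Rightarrow> (box \<Rightarrow> box \<Rightarrow> complex)" where
  "mscale c M = (\<lambda>m k. c * M m k)"

definition cdim :: "(box \<Rightarrow> box \<Rightarrow> complex) set \<Rightarrow> nat" where
  "cdim S = vector_space.dim mscale S"

end

theory Submission
  imports Defs "HOL-Library.Product_Lexorder"
begin

(* A tangent vector is a colour-preserving C[x,y]-homomorphism I_lambda -> C[x,y]/I_lambda,
   recorded by its entries x^m |-> x^k.  For p >> q the T-weight of such an entry is positive
   exactly when k precedes m lexicographically, so T^+ is the space of lexicographically
   positive homomorphisms.  Linearity in x and y propagates a nonzero entry with target strictly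
   left of its source to a nonzero entry on some arrow d_{i,j}, and one with target straight
   below its source to some arrow u_{i,j} with i = l(j) - 1; entries on non-invariant arrows
   vanish by equivariance.  Conversely every invariant arrow carries a positive homomorphism
   that is 1 on it and 0 on all other such arrows.  These homomorphisms form a basis, so
   dim T^+ = beta(lambda). *)

section \<open>Dimension via a dual family of evaluations\<close>

lemma vector_space_mscale: "vector_space mscale"
  by unfold_locales (simp_all add: mscale_def fun_eq_iff algebra_simps)

lemma sum_mscale_apply:
  "(\<Sum>x\<in>S. mscale (c x) (F x)) m k = (\<Sum>x\<in>S. c x * F x m k)"
  by (induction S rule: infinite_finite_induct) (simp_all add: mscale_def)

lemma dim_eq_card_of_dual_family:
  fixes V :: "(box \<Rightarrow> box \<Rightarrow> complex) set"
    and E :: "'s \<Rightarrow> box \<Rightarrow> box \<Rightarrow> complex" and pt :: "'s \<Rightarrow> box \<times> box"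
  assumes "finite S" and V: "module.subspace mscale V" and "E ` S \<subseteq> V"
    and dual: "\<And>s t. s \<in> S \<Longrightarrow> t \<in> S \<Longrightarrow> case_prod (E s) (pt t) = of_bool (s = t)"
    and zero: "\<And>M. M \<in> V \<Longrightarrow> (\<And>t. t \<in> S \<Longrightarrow> case_prod M (pt t) = 0) \<Longrightarrow> M = 0"
  shows "vector_space.dim mscale V = card S"
proof -
  interpret vector_space mscale by (rule vector_space_mscale)
  have "inj_on E S"
  proof (rule inj_onI)
    fix s t assume "s \<in> S" "t \<in> S" "E s = E t"
    then show "s = t"
      using dual[OF \<open>t \<in> S\<close> \<open>s \<in> S\<close>] dual[OF \<open>s \<in> S\<close> \<open>s \<in> S\<close>] by auto
  qed
  have combination_at: "case_prod (\<Sum>t\<in>S. mscale (c t) (E t)) (pt s) = c s" if "s \<in> S" for c s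
  proof -
    have "case_prod (\<Sum>t\<in>S. mscale (c t) (E t)) (pt s) = (\<Sum>t\<in>S. c t * case_prod (E t) (pt s))"
      by (simp add: split_def sum_mscale_apply)
    also have "\<dots> = (\<Sum>t\<in>S. if t = s then c t else 0)"
      using dual[OF _ that] by (intro sum.cong) auto
    finally show ?thesis using \<open>finite S\<close> that by simp
  qed
  have "independent (E ` S)"
  proof
    assume "dependent (E ` S)"
    then obtain u s where "s \<in> S" "u (E s) \<noteq> 0" "(\<Sum>v\<in>E ` S. mscale (u v) v) = 0"
      using dependent_finite \<open>finite S\<close> by blast
    moreover have "(\<Sum>v\<in>E ` S. mscale (u v) v) = (\<Sum>t\<in>S. mscale (u (E t)) (E t))"
      using sum.reindex[OF \<open>inj_on E S\<close>] by simp
    ultimately show False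
      using combination_at[of s "u \<circ> E"] by (simp add: split_def)
  qed
  moreover have "V \<subseteq> span (E ` S)"
  proof
    fix M assume "M \<in> V"
    define P where "P = (\<Sum>t\<in>S. mscale (case_prod M (pt t)) (E t))"
    have "P \<in> span (E ` S)"
      unfolding P_def by (intro span_sum span_scale span_base) simp
    moreover have "M - P = 0"
    proof (rule zero)
      show "M - P \<in> V"
        unfolding P_def using V \<open>M \<in> V\<close> \<open>E ` S \<subseteq> V\<close>
        by (intro subspace_diff subspace_sum subspace_scale) auto
      show "case_prod (M - P) (pt t) = 0" if "t \<in> S" for t
        using combination_at[OF that] unfolding P_def by (simp add: split_def)
    qed
    ultimately show "M \<in> span (E ` S)" by simp
  qed
  ultimately show ?thesis
    using dim_unique[OF \<open>E ` S \<subseteq> V\<close>] card_image[OF \<open>inj_on E S\<close>] by simp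
qed

lemma mem_downset_iff_less_card:
  fixes S :: "nat set"
  assumes "finite S" and "\<And>x y. x \<in> S \<Longrightarrow> y \<le> x \<Longrightarrow> y \<in> S"
  shows "x \<in> S \<longleftrightarrow> x < card S"
proof
  assume "x \<in> S"
  then have "{..x} \<subseteq> S" using assms(2) by auto
  then have "card {..x} \<le> card S" by (rule card_mono[OF assms(1)])
  then show "x < card S" by simp
next
  assume "x < card S"
  show "x \<in> S"
  proof (rule ccontr)
    assume "x \<notin> S"
    then have "S \<subseteq> {..<x}" using assms(2) by (metis lessThan_iff not_le subsetI)
    then show False using card_mono[of "{..<x}" S] \<open>x < card S\<close> by simp
  qed
qed

lemma young_finite: "young Y \<Longrightarrow> finite Y"
  unfolding young_def by blast

lemma young_downward_closed: "young Y \<Longrightarrow> (i, j) \<in> Y \<Longrightarrow> i' \<le> i \<Longrightarrow> j' \<le> j \<Longrightarrow> (i', j') \<in> Y"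
  unfolding young_def by blast

lemma young_mem_iff_less_rowlen:
  assumes "young Y"
  shows "(i, j) \<in> Y \<longleftrightarrow> i < rowlen Y j"
proof -
  have "finite {i. (i, j) \<in> Y}"
    using finite_vimageI[OF young_finite[OF assms], of "\<lambda>i. (i, j)"] by (simp add: inj_on_def vimage_def)
  moreover have "(y, j) \<in> Y" if "(x, j) \<in> Y" and "y \<le> x" for x y
    using young_downward_closed[OF assms that(1)] that(2) by simp
  ultimately show ?thesis
    unfolding rowlen_def by (subst mem_downset_iff_less_card[symmetric]) auto
qed

lemma young_mem_iff_less_collen:
  assumes "young Y"
  shows "(i, j) \<in> Y \<longleftrightarrow> j < collen Y i"
proof -
  have "finite {j. (i, j) \<in> Y}"
    using finite_vimageI[OF young_finite[OF assms], of "Pair i"] by (simp add: inj_on_def vimage_def)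
  moreover have "(i, y) \<in> Y" if "(i, x) \<in> Y" and "y \<le> x" for x y
    using young_downward_closed[OF assms that(1)] that(2) by simp
  ultimately show ?thesis
    unfolding collen_def by (subst mem_downset_iff_less_card[symmetric]) auto
qed

lemma rowlen_antimono:
  assumes "young Y" and "j \<le> j'"
  shows "rowlen Y j' \<le> rowlen Y j"
proof (rule ccontr)
  assume "\<not> ?thesis"
  then have "(rowlen Y j, j') \<in> Y" using young_mem_iff_less_rowlen[OF assms(1)] by simp
  then have "(rowlen Y j, j) \<in> Y" using young_downward_closed[OF assms(1)] assms(2) by blast
  then show False using young_mem_iff_less_rowlen[OF assms(1)] by simp
qed

lemma collen_antimono:
  assumes "young Y" and "i \<le> i'"
  shows "collen Y i' \<le> collen Y i"
proof (rule ccontr)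
  assume "\<not> ?thesis"
  then have "(i', collen Y i) \<in> Y" using young_mem_iff_less_collen[OF assms(1)] by simp
  then have "(i, collen Y i) \<in> Y" using young_downward_closed[OF assms(1)] assms(2) by blast
  then show False using young_mem_iff_less_collen[OF assms(1)] by simp
qed

lemma young_snd_less_card:
  assumes "young Y" and "(i, j) \<in> Y"
  shows "j < card Y"
proof -
  have "Pair i ` {..j} \<subseteq> Y" using young_downward_closed[OF assms] by auto
  then have "card (Pair i ` {..j}) \<le> card Y"
    using young_finite[OF assms(1)] by (rule card_mono[rotated])
  then show ?thesis by (simp add: card_image inj_on_def)
qed

lemma young_fst_less_card:
  assumes "young Y" and "(i, j) \<in> Y"
  shows "i < card Y"
proof -
  have "(\<lambda>i'. (i', j)) ` {..i} \<subseteq> Y" using young_downward_closed[OF assms] by auto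
  then have "card ((\<lambda>i'. (i', j)) ` {..i}) \<le> card Y"
    using young_finite[OF assms(1)] by (rule card_mono[rotated])
  then show ?thesis by (simp add: card_image inj_on_def)
qed

section \<open>The tangent space and its lexicographically positive part\<close>

lemma tangent_space_support:
  "M \<in> tangent_space a b n Y \<Longrightarrow> M m k \<noteq> 0 \<Longrightarrow> m \<notin> Y \<and> k \<in> Y"
  unfolding tangent_space_def by blast

lemma tangent_space_color:
  "M \<in> tangent_space a b n Y \<Longrightarrow> M m k \<noteq> 0 \<Longrightarrow> color a b n m = color a b n k"
  unfolding tangent_space_def by blast

lemma tangent_space_shift_fst:
  assumes "M \<in> tangent_space a b n Y" and "(x, y) \<notin> Y" and "(k1, k2) \<in> Y"
  shows "M (x + 1, y) (k1, k2) = (if 1 \<le> k1 then M (x, y) (k1 - 1, k2) else 0)"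
  using assms unfolding tangent_space_def by fastforce

lemma tangent_space_shift_snd:
  assumes "M \<in> tangent_space a b n Y" and "(x, y) \<notin> Y" and "(k1, k2) \<in> Y"
  shows "M (x, y + 1) (k1, k2) = (if 1 \<le> k2 then M (x, y) (k1, k2 - 1) else 0)"
  using assms unfolding tangent_space_def by fastforce

lemma tangent_spaceI:
  assumes "\<And>m k. M m k \<noteq> 0 \<Longrightarrow> m \<notin> Y \<and> k \<in> Y \<and> color a b n m = color a b n k"
    and "\<And>x y k1 k2. (x, y) \<notin> Y \<Longrightarrow> (k1, k2) \<in> Y \<Longrightarrow>
          M (x + 1, y) (k1, k2) = (if 1 \<le> k1 then M (x, y) (k1 - 1, k2) else 0)"
    and "\<And>x y k1 k2. (x, y) \<notin> Y \<Longrightarrow> (k1, k2) \<in> Y \<Longrightarrow>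
          M (x, y + 1) (k1, k2) = (if 1 \<le> k2 then M (x, y) (k1, k2 - 1) else 0)"
  shows "M \<in> tangent_space a b n Y"
  unfolding tangent_space_def using assms by (auto simp: split_paired_all)

lemma tangent_space_walk_fst:
  assumes Y: "young Y" and M: "M \<in> tangent_space a b n Y" and xy: "(x, y) \<notin> Y"
  shows "M (x + t, y) (k1, k2) \<noteq> 0 \<Longrightarrow> t \<le> k1 \<and> M (x, y) (k1 - t, k2) = M (x + t, y) (k1, k2)"
proof (induction t arbitrary: k1)
  case (Suc t)
  have k: "(k1, k2) \<in> Y" using tangent_space_support[OF M Suc.prems] by simp
  have "(x + t, y) \<notin> Y" using xy young_downward_closed[OF Y, of "x + t" y x y] by auto
  then have shift: "M (x + Suc t, y) (k1, k2) = (if 1 \<le> k1 then M (x + t, y) (k1 - 1, k2) else 0)"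
    using tangent_space_shift_fst[OF M _ k] by simp
  then have k1: "1 \<le> k1" and nz: "M (x + t, y) (k1 - 1, k2) \<noteq> 0"
    using Suc.prems by (auto split: if_splits)
  have "t \<le> k1 - 1" and "M (x, y) (k1 - 1 - t, k2) = M (x + t, y) (k1 - 1, k2)"
    using Suc.IH[OF nz] by auto
  with shift k1 show ?case by simp
qed simp

lemma tangent_space_walk_snd:
  assumes Y: "young Y" and M: "M \<in> tangent_space a b n Y" and xy: "(x, y) \<notin> Y"
  shows "M (x, y + t) (k1, k2) \<noteq> 0 \<Longrightarrow> t \<le> k2 \<and> M (x, y) (k1, k2 - t) = M (x, y + t) (k1, k2)"
proof (induction t arbitrary: k2)
  case (Suc t)
  have k: "(k1, k2) \<in> Y" using tangent_space_support[OF M Suc.prems] by simp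
  have "(x, y + t) \<notin> Y" using xy young_downward_closed[OF Y, of x "y + t" x y] by auto
  then have shift: "M (x, y + Suc t) (k1, k2) = (if 1 \<le> k2 then M (x, y + t) (k1, k2 - 1) else 0)"
    using tangent_space_shift_snd[OF M _ k] by simp
  then have k2: "1 \<le> k2" and nz: "M (x, y + t) (k1, k2 - 1) \<noteq> 0"
    using Suc.prems by (auto split: if_splits)
  have "t \<le> k2 - 1" and "M (x, y) (k1, k2 - 1 - t) = M (x, y + t) (k1, k2 - 1)"
    using Suc.IH[OF nz] by auto
  with shift k2 show ?case by simp
qed simp

lemma subspace_tangent_space: "module.subspace mscale (tangent_space a b n Y)"
proof -
  interpret vector_space mscale by (rule vector_space_mscale)
  show ?thesis
  proof (rule subspaceI)
    show "0 \<in> tangent_space a b n Y" by (rule tangent_spaceI) simp_all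
  next
    fix M N assume M: "M \<in> tangent_space a b n Y" and N: "N \<in> tangent_space a b n Y"
    show "M + N \<in> tangent_space a b n Y"
    proof (rule tangent_spaceI)
      fix m k assume "(M + N) m k \<noteq> 0"
      then have "M m k \<noteq> 0 \<or> N m k \<noteq> 0" by auto
      then show "m \<notin> Y \<and> k \<in> Y \<and> color a b n m = color a b n k"
        using tangent_space_support tangent_space_color M N by blast
    next
      fix x y k1 k2 assume xy: "(x, y) \<notin> Y" and k: "(k1, k2) \<in> Y"
      show "(M + N) (x + 1, y) (k1, k2) = (if 1 \<le> k1 then (M + N) (x, y) (k1 - 1, k2) else 0)"
        and "(M + N) (x, y + 1) (k1, k2) = (if 1 \<le> k2 then (M + N) (x, y) (k1, k2 - 1) else 0)"
        using tangent_space_shift_fst[OF M xy k] tangent_space_shift_fst[OF N xy k]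
          tangent_space_shift_snd[OF M xy k] tangent_space_shift_snd[OF N xy k] by simp_all
    qed
  next
    fix c M assume M: "M \<in> tangent_space a b n Y"
    show "mscale c M \<in> tangent_space a b n Y"
    proof (rule tangent_spaceI)
      fix m k assume "mscale c M m k \<noteq> 0"
      then have "M m k \<noteq> 0" by (simp add: mscale_def)
      then show "m \<notin> Y \<and> k \<in> Y \<and> color a b n m = color a b n k"
        using tangent_space_support tangent_space_color M by blast
    next
      fix x y k1 k2 assume xy: "(x, y) \<notin> Y" and k: "(k1, k2) \<in> Y"
      show "mscale c M (x + 1, y) (k1, k2) = (if 1 \<le> k1 then mscale c M (x, y) (k1 - 1, k2) else 0)"
        and "mscale c M (x, y + 1) (k1, k2) = (if 1 \<le> k2 then mscale c M (x, y) (k1, k2 - 1) else 0)"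
        using tangent_space_shift_fst[OF M xy k] tangent_space_shift_snd[OF M xy k]
        by (simp_all add: mscale_def)
    qed
  qed
qed

lemma subspace_support_subset: "module.subspace mscale {M. \<forall>m k. M m k \<noteq> 0 \<longrightarrow> P m k}"
proof -
  interpret vector_space mscale by (rule vector_space_mscale)
  show ?thesis
  proof (rule subspaceI)
    fix M N :: "box \<Rightarrow> box \<Rightarrow> complex"
    assume M: "M \<in> {M. \<forall>m k. M m k \<noteq> 0 \<longrightarrow> P m k}"
      and N: "N \<in> {M. \<forall>m k. M m k \<noteq> 0 \<longrightarrow> P m k}"
    show "M + N \<in> {M. \<forall>m k. M m k \<noteq> 0 \<longrightarrow> P m k}"
    proof (intro CollectI allI impI)
      fix m k assume "(M + N) m k \<noteq> 0"
      then have "M m k \<noteq> 0 \<or> N m k \<noteq> 0" by auto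
      then show "P m k" using M N by blast
    qed
  qed (simp_all add: mscale_def)
qed

text \<open>Here \<open>k < m\<close> is the lexicographic order on boxes (\<open>Product_Lexorder\<close>).\<close>

definition tangent_lex :: "int \<Rightarrow> int \<Rightarrow> nat \<Rightarrow> box set \<Rightarrow> (box \<Rightarrow> box \<Rightarrow> complex) set" where
  "tangent_lex a b n Y = {M \<in> tangent_space a b n Y. \<forall>m k. M m k \<noteq> 0 \<longrightarrow> k < m}"

lemma subspace_tangent_lex: "module.subspace mscale (tangent_lex a b n Y)"
proof -
  interpret vector_space mscale by (rule vector_space_mscale)
  have "tangent_lex a b n Y = tangent_space a b n Y \<inter> {M. \<forall>m k. M m k \<noteq> 0 \<longrightarrow> k < m}"
    unfolding tangent_lex_def by blast
  then show ?thesis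
    by (simp only:) (rule subspace_inter[OF subspace_tangent_space subspace_support_subset])
qed

lemma T_weight_pos_iff_less:
  fixes p q C :: int
  assumes "0 < q" and "C * q < p" and "\<bar>int (snd m) - int (snd k)\<bar> \<le> C"
  shows "0 < T_weight p q m k \<longleftrightarrow> k < m"
proof -
  define A where "A = int (fst m) - int (fst k)"
  define B where "B = int (snd m) - int (snd k)"
  have weight: "T_weight p q m k = p * A + q * B"
    unfolding T_weight_def A_def B_def by (simp add: algebra_simps)
  have "\<bar>q * B\<bar> \<le> q * C"
    using assms(1,3) by (simp add: abs_mult mult_left_mono B_def)
  then have qB: "- p < q * B" "q * B < p"
    using assms(2) by (simp_all add: mult.commute abs_le_iff)
  consider "A \<le> -1" | "A = 0" | "1 \<le> A" by linarith
  then show ?thesis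
  proof cases
    case 1
    then have "p * A \<le> - p" using qB mult_left_mono[OF 1, of p] by simp
    then have "\<not> 0 < T_weight p q m k" using weight qB by linarith
    moreover have "\<not> k < m" using 1 unfolding A_def less_prod_def' by auto
    ultimately show ?thesis by simp
  next
    case 2
    then show ?thesis
      using weight assms(1) unfolding A_def B_def less_prod_def' by (auto simp: zero_less_mult_iff)
  next
    case 3
    then have "p \<le> p * A" using qB mult_left_mono[OF 3, of p] by simp
    then have "0 < T_weight p q m k" using weight qB by linarith
    moreover have "k < m" using 3 unfolding A_def less_prod_def' by auto
    ultimately show ?thesis by simp
  qed
qed

lemma tangent_space_snd_dist_le_card:
  assumes Y: "young Y" and M: "M \<in> tangent_space a b n Y" and "M m k \<noteq> 0"
  shows "\<bar>int (snd m) - int (snd k)\<bar> \<le> int (card Y)"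
proof -
  obtain m1 m2 k1 k2 where mk: "m = (m1, m2)" "k = (k1, k2)" by fastforce
  have "k \<in> Y" using tangent_space_support[OF M \<open>M m k \<noteq> 0\<close>] by simp
  then have "k2 < card Y" using young_snd_less_card[OF Y] mk by simp
  moreover have "m2 \<le> k2 + card Y"
  proof (rule ccontr)
    assume far: "\<not> m2 \<le> k2 + card Y"
    define y where "y = m2 - Suc k2"
    then have y: "m2 = y + Suc k2" and "card Y \<le> y" using far by simp_all
    then have "(m1, y) \<notin> Y" using young_snd_less_card[OF Y, of m1 y] by auto
    from tangent_space_walk_snd[OF Y M this, of "Suc k2" k1 k2] show False
      using \<open>M m k \<noteq> 0\<close> mk y by simp
  qed
  ultimately show ?thesis using mk by simp
qed

lemma tangent_pos_eq_tangent_lex: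
  fixes p q :: int
  assumes "young Y" and "0 < q" and "int (card Y) * q < p"
  shows "tangent_pos a b n p q Y = tangent_lex a b n Y"
proof -
  have weight: "0 < T_weight p q m k \<longleftrightarrow> k < m"
    if "M \<in> tangent_space a b n Y" and "M m k \<noteq> 0" for M m k
    using T_weight_pos_iff_less[OF assms(2,3) tangent_space_snd_dist_le_card[OF assms(1) that]] .
  show ?thesis
    unfolding tangent_pos_def tangent_lex_def by (intro Collect_cong conj_cong refl) (simp add: weight)
qed

section \<open>Positive tangent vectors are determined by their values on arrows\<close>

lemma tangent_space_row_end_eq_0:
  assumes Y: "young Y" and M: "M \<in> tangent_space a b n Y"
    and d0: "\<And>i j. (i, j) \<in> Y \<Longrightarrow> M (rowlen Y j, j) (i, collen Y i - 1) = 0"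
  shows "k1 < rowlen Y j \<Longrightarrow> M (rowlen Y j, j) (k1, k2) = 0"
proof (induction k2 arbitrary: j k1 rule: measure_induct_rule[where f = "\<lambda>k2. card Y - k2"])
  case (less k2)
  show ?case
  proof (rule ccontr)
    assume nz: "M (rowlen Y j, j) (k1, k2) \<noteq> 0"
    have k: "(k1, k2) \<in> Y" and m: "(rowlen Y j, j) \<notin> Y"
      using tangent_space_support[OF M nz] by auto
    have "(k1, j) \<in> Y" using less.prems young_mem_iff_less_rowlen[OF Y] by simp
    show False
    proof (cases "(k1, k2 + 1) \<in> Y")
      case False
      then have "k2 = collen Y k1 - 1" using k young_mem_iff_less_collen[OF Y] by force
      then show False using d0[OF \<open>(k1, j) \<in> Y\<close>] nz by simp
    next
      case True
      \<comment> \<open>Move up one row, then walk left to the end of that row.\<close>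
      define t where "t = rowlen Y j - rowlen Y (j + 1)"
      have t: "rowlen Y (j + 1) + t = rowlen Y j"
        using rowlen_antimono[OF Y, of j "j + 1"] t_def by simp
      have row_end: "(rowlen Y (j + 1), j + 1) \<notin> Y" using young_mem_iff_less_rowlen[OF Y] by simp
      have "M (rowlen Y (j + 1) + t, j + 1) (k1, k2 + 1) \<noteq> 0"
        using tangent_space_shift_snd[OF M m True] nz t by simp
      with tangent_space_walk_fst[OF Y M row_end this]
      have "t \<le> k1" and "M (rowlen Y (j + 1), j + 1) (k1 - t, k2 + 1) \<noteq> 0" by auto
      moreover have "k1 - t < rowlen Y (j + 1)" using less.prems t \<open>t \<le> k1\<close> by linarith
      moreover have "card Y - (k2 + 1) < card Y - k2"
        using young_snd_less_card[OF Y True] by linarith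
      ultimately show False using less.IH by blast
    qed
  qed
qed

lemma tangent_space_eq_0_if_fst_less:
  assumes Y: "young Y" and M: "M \<in> tangent_space a b n Y"
    and d0: "\<And>i j. (i, j) \<in> Y \<Longrightarrow> M (rowlen Y j, j) (i, collen Y i - 1) = 0"
    and "fst k < fst m"
  shows "M m k = 0"
proof (rule ccontr)
  obtain m1 m2 k1 k2 where mk: "m = (m1, m2)" "k = (k1, k2)" by fastforce
  assume "M m k \<noteq> 0"
  then have "(m1, m2) \<notin> Y" using tangent_space_support[OF M] mk by blast
  define t where "t = m1 - rowlen Y m2"
  have t: "rowlen Y m2 + t = m1"
    using \<open>(m1, m2) \<notin> Y\<close> young_mem_iff_less_rowlen[OF Y] t_def by simp
  have row_end: "(rowlen Y m2, m2) \<notin> Y" using young_mem_iff_less_rowlen[OF Y] by simp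
  have "M (rowlen Y m2 + t, m2) (k1, k2) \<noteq> 0" using \<open>M m k \<noteq> 0\<close> mk t by simp
  with tangent_space_walk_fst[OF Y M row_end this]
  have "t \<le> k1" and "M (rowlen Y m2, m2) (k1 - t, k2) \<noteq> 0" by auto
  moreover have "k1 - t < rowlen Y m2" using assms(4) mk t \<open>t \<le> k1\<close> by simp
  ultimately show False using tangent_space_row_end_eq_0[OF Y M d0] by blast
qed

lemma tangent_space_col_end_eq_0:
  assumes Y: "young Y" and M: "M \<in> tangent_space a b n Y"
    and u0: "\<And>i j. (i, j) \<in> Y \<Longrightarrow> i = rowlen Y j - 1 \<Longrightarrow> M (i, collen Y i) (i, j) = 0"
  shows "M (i, collen Y i) (i, k2) = 0"
proof (induction i arbitrary: k2 rule: measure_induct_rule[where f = "\<lambda>i. card Y - i"])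
  case (less i)
  show ?case
  proof (rule ccontr)
    assume nz: "M (i, collen Y i) (i, k2) \<noteq> 0"
    have k: "(i, k2) \<in> Y" and m: "(i, collen Y i) \<notin> Y"
      using tangent_space_support[OF M nz] by auto
    show False
    proof (cases "(i + 1, k2) \<in> Y")
      case False
      then have "i = rowlen Y k2 - 1" using k young_mem_iff_less_rowlen[OF Y] by force
      then show False using u0[OF k] nz by simp
    next
      case True
      \<comment> \<open>Move right one column, then walk down to the end of that column.\<close>
      define t where "t = collen Y i - collen Y (i + 1)"
      have t: "collen Y (i + 1) + t = collen Y i"
        using collen_antimono[OF Y, of i "i + 1"] t_def by simp
      have col_end: "(i + 1, collen Y (i + 1)) \<notin> Y" using young_mem_iff_less_collen[OF Y] by simp
      have "M (i + 1, collen Y (i + 1) + t) (i + 1, k2) \<noteq> 0"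
        using tangent_space_shift_fst[OF M m True] nz t by simp
      with tangent_space_walk_snd[OF Y M col_end this]
      have "M (i + 1, collen Y (i + 1)) (i + 1, k2 - t) \<noteq> 0" by auto
      moreover have "card Y - (i + 1) < card Y - i"
        using young_fst_less_card[OF Y True] by linarith
      ultimately show False using less.IH by blast
    qed
  qed
qed

lemma tangent_space_eq_0_if_fst_eq:
  assumes Y: "young Y" and M: "M \<in> tangent_space a b n Y"
    and u0: "\<And>i j. (i, j) \<in> Y \<Longrightarrow> i = rowlen Y j - 1 \<Longrightarrow> M (i, collen Y i) (i, j) = 0"
    and "fst k = fst m"
  shows "M m k = 0"
proof (rule ccontr)
  obtain m1 m2 k2 where mk: "m = (m1, m2)" "k = (m1, k2)" using assms(4) by (metis prod.collapse)
  assume "M m k \<noteq> 0"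
  then have "(m1, m2) \<notin> Y" using tangent_space_support[OF M] mk by blast
  define t where "t = m2 - collen Y m1"
  have t: "collen Y m1 + t = m2"
    using \<open>(m1, m2) \<notin> Y\<close> young_mem_iff_less_collen[OF Y] t_def by simp
  have col_end: "(m1, collen Y m1) \<notin> Y" using young_mem_iff_less_collen[OF Y] by simp
  have "M (m1, collen Y m1 + t) (m1, k2) \<noteq> 0" using \<open>M m k \<noteq> 0\<close> mk t by simp
  with tangent_space_walk_snd[OF Y M col_end this]
  have "M (m1, collen Y m1) (m1, k2 - t) \<noteq> 0" by auto
  then show False using tangent_space_col_end_eq_0[OF Y M u0] by blast
qed

section \<open>A basis indexed by the invariant arrows\<close>

lemma color_eq_translate:
  assumes "color a b n p = color a b n q"
    and "int (fst m) - int (fst k) = int (fst p) - int (fst q)"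
    and "int (snd m) - int (snd k) = int (snd p) - int (snd q)"
  shows "color a b n m = color a b n k"
proof -
  have "(a * int (fst m) + b * int (snd m)) - (a * int (fst k) + b * int (snd k))
      = a * (int (fst m) - int (fst k)) + b * (int (snd m) - int (snd k))"
    by (simp add: algebra_simps)
  also have "\<dots> = (a * int (fst p) + b * int (snd p)) - (a * int (fst q) + b * int (snd q))"
    unfolding assms(2,3) by (simp add: algebra_simps)
  finally show ?thesis using assms(1) unfolding color_def by (simp add: mod_eq_dvd_iff)
qed

definition rel_matrix :: "(box \<Rightarrow> box \<Rightarrow> bool) \<Rightarrow> box \<Rightarrow> box \<Rightarrow> complex" where
  "rel_matrix R m k = of_bool (R m k)"

lemma rel_matrix_mem_tangent_lex:
  assumes "\<And>m k. R m k \<Longrightarrow> m \<notin> Y \<and> k \<in> Y \<and> k < m \<and> color a b n m = color a b n k"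
    and "\<And>x y k1 k2. (x, y) \<notin> Y \<Longrightarrow> (k1, k2) \<in> Y \<Longrightarrow>
          R (x + 1, y) (k1, k2) \<longleftrightarrow> 1 \<le> k1 \<and> R (x, y) (k1 - 1, k2)"
    and "\<And>x y k1 k2. (x, y) \<notin> Y \<Longrightarrow> (k1, k2) \<in> Y \<Longrightarrow>
          R (x, y + 1) (k1, k2) \<longleftrightarrow> 1 \<le> k2 \<and> R (x, y) (k1, k2 - 1)"
  shows "rel_matrix R \<in> tangent_lex a b n Y"
proof -
  have "rel_matrix R \<in> tangent_space a b n Y"
  proof (rule tangent_spaceI)
    fix x y k1 k2 assume xy: "(x, y) \<notin> Y" and k: "(k1, k2) \<in> Y"
    show "rel_matrix R (x + 1, y) (k1, k2) = (if 1 \<le> k1 then rel_matrix R (x, y) (k1 - 1, k2) else 0)"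
      using assms(2)[OF xy k] unfolding rel_matrix_def by simp
    show "rel_matrix R (x, y + 1) (k1, k2) = (if 1 \<le> k2 then rel_matrix R (x, y) (k1, k2 - 1) else 0)"
      using assms(3)[OF xy k] unfolding rel_matrix_def by simp
  qed (use assms(1) in \<open>simp add: rel_matrix_def\<close>)
  moreover have "k < m" if "rel_matrix R m k \<noteq> 0" for m k
    using that assms(1) by (simp add: rel_matrix_def)
  ultimately show ?thesis unfolding tangent_lex_def by blast
qed

definition d_arrow :: "box set \<Rightarrow> box \<Rightarrow> box \<times> box" where
  "d_arrow Y = (\<lambda>(i, j). ((rowlen Y j, j), (i, collen Y i - 1)))"

definition u_arrow :: "box set \<Rightarrow> box \<Rightarrow> box \<times> box" where
  "u_arrow Y = (\<lambda>(i, j). ((i, collen Y i), (rowlen Y j - 1, j)))"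

definition d_invariant :: "int \<Rightarrow> int \<Rightarrow> nat \<Rightarrow> box set \<Rightarrow> box set" where
  "d_invariant a b n Y = {(i, j) \<in> Y. color a b n (rowlen Y j, j) = color a b n (i, collen Y i - 1)}"

definition u_invariant :: "int \<Rightarrow> int \<Rightarrow> nat \<Rightarrow> box set \<Rightarrow> box set" where
  "u_invariant a b n Y =
     {(i, j) \<in> Y. i = rowlen Y j - 1 \<and> color a b n (i, collen Y i) = color a b n (i, j)}"

text \<open>The tangent vector of the arrow \<open>d\<^sub>i\<^sub>0\<^sub>,\<^sub>j\<^sub>0\<close> translates \<open>x\<^sup>m\<close> along the arrow, i.e.
  by \<open>(-\<alpha>, \<beta>)\<close>, for \<open>m\<close> in the rows \<open>j \<le> j\<^sub>0\<close> right of column \<open>l(j\<^sub>0)\<close>; linearity in \<open>y\<close> forces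
  the value on row \<open>j\<close> to vanish as soon as, for some row \<open>j'\<close> between \<open>j\<close> and \<open>j\<^sub>0\<close>, the image
  of \<open>x\<^bsup>l(j')\<^esup>y\<^bsup>j'+1\<^esup>\<close> leaves the diagram.  \<open>u_rel\<close> is the analogue for \<open>u\<^sub>i\<^sub>0\<^sub>,\<^sub>j\<^sub>0\<close> with
  the roles of \<open>x\<close> and \<open>y\<close> exchanged.\<close>

definition d_rel :: "box set \<Rightarrow> nat \<Rightarrow> nat \<Rightarrow> box \<Rightarrow> box \<Rightarrow> bool" where
  "d_rel Y i0 j0 m k \<longleftrightarrow> (let \<alpha> = rowlen Y j0 - i0; \<beta> = collen Y i0 - 1 - j0 in
     m \<notin> Y \<and> k \<in> Y \<and> fst k + \<alpha> = fst m \<and> snd k = snd m + \<beta> \<and> rowlen Y j0 \<le> fst m \<and> snd m \<le> j0 \<and>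
     (\<forall>j'. snd m \<le> j' \<and> j' < j0 \<longrightarrow> (rowlen Y j' - \<alpha>, j' + 1 + \<beta>) \<in> Y))"

definition u_rel :: "box set \<Rightarrow> nat \<Rightarrow> nat \<Rightarrow> box \<Rightarrow> box \<Rightarrow> bool" where
  "u_rel Y i0 j0 m k \<longleftrightarrow> (let \<gamma> = collen Y i0 - j0 in
     m \<notin> Y \<and> k \<in> Y \<and> fst k = fst m \<and> snd k + \<gamma> = snd m \<and> collen Y i0 \<le> snd m \<and> fst m \<le> i0 \<and>
     (\<forall>i'. fst m \<le> i' \<and> i' < i0 \<longrightarrow> (i' + 1, collen Y i' - \<gamma>) \<in> Y))"

lemma all_between_split:
  "(\<forall>x. y \<le> x \<and> x < z \<longrightarrow> P x) \<longleftrightarrow> (y < z \<longrightarrow> P y) \<and> (\<forall>x. y + 1 \<le> x \<and> x < z \<longrightarrow> P x)"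
  for y z :: nat
  by (auto simp: Suc_le_eq) (metis le_neq_implies_less)

context
  fixes Y i0 j0
  assumes Y: "young Y" and box: "(i0, j0) \<in> Y"
begin

lemma d_rel_shift_fst:
  assumes m: "(x, y) \<notin> Y" and k: "(k1, k2) \<in> Y"
  shows "d_rel Y i0 j0 (x + 1, y) (k1, k2) \<longleftrightarrow> 1 \<le> k1 \<and> d_rel Y i0 j0 (x, y) (k1 - 1, k2)"
proof -
  define x0 where "x0 = rowlen Y j0"
  have i0: "i0 < x0" using box young_mem_iff_less_rowlen[OF Y] x0_def by simp
  have m1: "(x + 1, y) \<notin> Y" using m young_downward_closed[OF Y, of "x + 1" y x y] by auto
  have k': "1 \<le> k1 \<Longrightarrow> (k1 - 1, k2) \<in> Y" using young_downward_closed[OF Y k, of "k1 - 1" k2] by simp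
  have "\<not> (x + 1 = x0 \<and> y \<le> j0)"
  proof
    assume "x + 1 = x0 \<and> y \<le> j0"
    then have "(x, y) \<in> Y"
      using rowlen_antimono[OF Y, of y j0] young_mem_iff_less_rowlen[OF Y] x0_def by simp
    then show False using m by simp
  qed
  then show ?thesis
    unfolding d_rel_def Let_def x0_def[symmetric]
    using m m1 k k' i0 by (cases "1 \<le> k1") auto
qed

lemma d_rel_shift_snd:
  assumes m: "(x, y) \<notin> Y" and k: "(k1, k2) \<in> Y"
  shows "d_rel Y i0 j0 (x, y + 1) (k1, k2) \<longleftrightarrow> 1 \<le> k2 \<and> d_rel Y i0 j0 (x, y) (k1, k2 - 1)"
proof -
  define x0 where "x0 = rowlen Y j0"
  define \<alpha> where "\<alpha> = x0 - i0"
  define \<beta> where "\<beta> = collen Y i0 - 1 - j0"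
  have i0: "i0 < x0" using box young_mem_iff_less_rowlen[OF Y] x0_def by simp
  have cj: "j0 < collen Y i0" using box young_mem_iff_less_collen[OF Y] by simp
  have m1: "(x, y + 1) \<notin> Y" using m young_downward_closed[OF Y, of x "y + 1" x y] by auto
  have k': "1 \<le> k2 \<Longrightarrow> (k1, k2 - 1) \<in> Y" using young_downward_closed[OF Y k, of k1 "k2 - 1"] by simp
  have "rowlen Y y \<le> x" using m young_mem_iff_less_rowlen[OF Y] by (simp add: not_less)
  then have step: "(rowlen Y y - \<alpha>, y + 1 + \<beta>) \<in> Y" if "k1 + \<alpha> = x" and "k2 = y + 1 + \<beta>"
    using young_downward_closed[OF Y k, of "rowlen Y y - \<alpha>" "y + 1 + \<beta>"] that by simp
  have top: "\<not> (x0 \<le> x \<and> k1 + \<alpha> = x \<and> k2 = j0 + 1 + \<beta>)"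
  proof
    assume h: "x0 \<le> x \<and> k1 + \<alpha> = x \<and> k2 = j0 + 1 + \<beta>"
    then have "i0 \<le> k1" and "k2 = collen Y i0" using i0 cj \<alpha>_def \<beta>_def by auto
    then have "(i0, collen Y i0) \<in> Y" using young_downward_closed[OF Y k] by simp
    then show False using young_mem_iff_less_collen[OF Y] by simp
  qed
  show ?thesis
    unfolding d_rel_def Let_def x0_def[symmetric] \<alpha>_def[symmetric] \<beta>_def[symmetric]
      fst_conv snd_conv all_between_split[of y]
    using m m1 k k' step top by (cases "1 \<le> k2") auto
qed

lemma d_rel_fst_less: "d_rel Y i0 j0 m k \<Longrightarrow> fst k < fst m"
  using box young_mem_iff_less_rowlen[OF Y] unfolding d_rel_def Let_def by auto

lemma d_rel_mem_tangent_lex: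
  assumes "color a b n (rowlen Y j0, j0) = color a b n (i0, collen Y i0 - 1)"
  shows "rel_matrix (d_rel Y i0 j0) \<in> tangent_lex a b n Y"
proof (rule rel_matrix_mem_tangent_lex)
  fix m k assume rel: "d_rel Y i0 j0 m k"
  have "i0 < rowlen Y j0" and "j0 < collen Y i0"
    using box young_mem_iff_less_rowlen[OF Y] young_mem_iff_less_collen[OF Y] by auto
  with rel have "color a b n m = color a b n k"
    by (intro color_eq_translate[OF assms]) (auto simp: d_rel_def Let_def)
  with rel d_rel_fst_less[OF rel] show "m \<notin> Y \<and> k \<in> Y \<and> k < m \<and> color a b n m = color a b n k"
    by (auto simp: d_rel_def Let_def less_prod_def)
qed (fact d_rel_shift_fst, fact d_rel_shift_snd)

lemma d_rel_at_d_arrow: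
  assumes "(i, j) \<in> Y"
  shows "d_rel Y i0 j0 (rowlen Y j, j) (i, collen Y i - 1) \<longleftrightarrow> (i, j) = (i0, j0)"
proof
  assume rel: "d_rel Y i0 j0 (rowlen Y j, j) (i, collen Y i - 1)"
  define \<alpha> where "\<alpha> = rowlen Y j0 - i0"
  define \<beta> where "\<beta> = collen Y i0 - 1 - j0"
  have row: "i + \<alpha> = rowlen Y j" and col: "collen Y i - 1 = j + \<beta>" and "j \<le> j0"
    and path: "\<forall>j'. j \<le> j' \<and> j' < j0 \<longrightarrow> (rowlen Y j' - \<alpha>, j' + 1 + \<beta>) \<in> Y"
    using rel unfolding d_rel_def Let_def \<alpha>_def \<beta>_def by auto
  have "j = j0"
  proof (rule ccontr)
    assume "j \<noteq> j0"
    then have "(rowlen Y j - \<alpha>, j + 1 + \<beta>) \<in> Y" using path \<open>j \<le> j0\<close> by simp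
    moreover have "j < collen Y i" using assms young_mem_iff_less_collen[OF Y] by simp
    moreover have "rowlen Y j - \<alpha> = i" and "j + 1 + \<beta> = collen Y i"
      using row col \<open>j < collen Y i\<close> by simp_all
    ultimately have "(i, collen Y i) \<in> Y" by simp
    then show False using young_mem_iff_less_collen[OF Y] by simp
  qed
  moreover have "i0 < rowlen Y j0" using box young_mem_iff_less_rowlen[OF Y] by simp
  ultimately show "(i, j) = (i0, j0)" using row \<alpha>_def by simp
next
  assume "(i, j) = (i0, j0)"
  then have i: "i = i0" and j: "j = j0" by simp_all
  have "j0 < collen Y i0" and "i0 < rowlen Y j0"
    using box young_mem_iff_less_rowlen[OF Y] young_mem_iff_less_collen[OF Y] by auto
  moreover have "(i0, collen Y i0 - 1) \<in> Y"
    using \<open>j0 < collen Y i0\<close> young_mem_iff_less_collen[OF Y, of i0 "collen Y i0 - 1"] by simp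
  moreover have "(rowlen Y j0, j0) \<notin> Y" using young_mem_iff_less_rowlen[OF Y] by simp
  ultimately show "d_rel Y i0 j0 (rowlen Y j, j) (i, collen Y i - 1)"
    unfolding d_rel_def Let_def i j by auto
qed

end

context
  fixes Y i0 j0
  assumes Y: "young Y" and box: "(i0, j0) \<in> Y" and arm: "i0 = rowlen Y j0 - 1"
begin

lemma u_rel_shift_fst:
  assumes m: "(x, y) \<notin> Y" and k: "(k1, k2) \<in> Y"
  shows "u_rel Y i0 j0 (x + 1, y) (k1, k2) \<longleftrightarrow> 1 \<le> k1 \<and> u_rel Y i0 j0 (x, y) (k1 - 1, k2)"
proof -
  define c0 where "c0 = collen Y i0"
  define \<gamma> where "\<gamma> = c0 - j0"
  have cj: "j0 < c0" using box young_mem_iff_less_collen[OF Y] c0_def by simp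
  have m1: "(x + 1, y) \<notin> Y" using m young_downward_closed[OF Y, of "x + 1" y x y] by auto
  have k': "1 \<le> k1 \<Longrightarrow> (k1 - 1, k2) \<in> Y" using young_downward_closed[OF Y k, of "k1 - 1" k2] by simp
  have "collen Y x \<le> y" using m young_mem_iff_less_collen[OF Y] by (simp add: not_less)
  then have step: "(x + 1, collen Y x - \<gamma>) \<in> Y" if "k1 = x + 1" and "k2 + \<gamma> = y"
    using young_downward_closed[OF Y k, of "x + 1" "collen Y x - \<gamma>"] that by simp
  have last: "\<not> (k1 = i0 + 1 \<and> k2 + \<gamma> = y \<and> c0 \<le> y)"
  proof
    assume h: "k1 = i0 + 1 \<and> k2 + \<gamma> = y \<and> c0 \<le> y"
    then have "j0 \<le> k2" using \<gamma>_def cj by linarith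
    then have "(i0 + 1, j0) \<in> Y" using young_downward_closed[OF Y k] h by simp
    then show False using arm young_mem_iff_less_rowlen[OF Y] by simp
  qed
  show ?thesis
    unfolding u_rel_def Let_def c0_def[symmetric] \<gamma>_def[symmetric]
      fst_conv snd_conv all_between_split[of x]
    using m m1 k k' step last by (cases "1 \<le> k1") auto
qed

lemma u_rel_shift_snd:
  assumes m: "(x, y) \<notin> Y" and k: "(k1, k2) \<in> Y"
  shows "u_rel Y i0 j0 (x, y + 1) (k1, k2) \<longleftrightarrow> 1 \<le> k2 \<and> u_rel Y i0 j0 (x, y) (k1, k2 - 1)"
proof -
  define c0 where "c0 = collen Y i0"
  have cj: "j0 < c0" using box young_mem_iff_less_collen[OF Y] c0_def by simp
  have m1: "(x, y + 1) \<notin> Y" using m young_downward_closed[OF Y, of x "y + 1" x y] by auto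
  have k': "1 \<le> k2 \<Longrightarrow> (k1, k2 - 1) \<in> Y" using young_downward_closed[OF Y k, of k1 "k2 - 1"] by simp
  have "\<not> (y + 1 = c0 \<and> x \<le> i0)"
  proof
    assume "y + 1 = c0 \<and> x \<le> i0"
    then have "(x, y) \<in> Y"
      using collen_antimono[OF Y, of x i0] young_mem_iff_less_collen[OF Y] c0_def by simp
    then show False using m by simp
  qed
  then show ?thesis
    unfolding u_rel_def Let_def c0_def[symmetric]
    using m m1 k k' cj by (cases "1 \<le> k2") auto
qed

lemma u_rel_mem_tangent_lex:
  assumes "color a b n (i0, collen Y i0) = color a b n (i0, j0)"
  shows "rel_matrix (u_rel Y i0 j0) \<in> tangent_lex a b n Y"
proof (rule rel_matrix_mem_tangent_lex)
  fix m k assume rel: "u_rel Y i0 j0 m k"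
  have "j0 < collen Y i0" using box young_mem_iff_less_collen[OF Y] by simp
  with rel have "color a b n m = color a b n k"
    by (intro color_eq_translate[OF assms]) (auto simp: u_rel_def Let_def)
  with rel \<open>j0 < collen Y i0\<close> show "m \<notin> Y \<and> k \<in> Y \<and> k < m \<and> color a b n m = color a b n k"
    by (auto simp: u_rel_def Let_def less_prod_def)
qed (fact u_rel_shift_fst, fact u_rel_shift_snd)

lemma u_rel_at_u_arrow:
  assumes "(i, j) \<in> Y" and "i = rowlen Y j - 1"
  shows "u_rel Y i0 j0 (i, collen Y i) (i, j) \<longleftrightarrow> (i, j) = (i0, j0)"
proof
  assume rel: "u_rel Y i0 j0 (i, collen Y i) (i, j)"
  define \<gamma> where "\<gamma> = collen Y i0 - j0"
  have col: "j + \<gamma> = collen Y i" and "i \<le> i0"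
    and path: "\<forall>i'. i \<le> i' \<and> i' < i0 \<longrightarrow> (i' + 1, collen Y i' - \<gamma>) \<in> Y"
    using rel unfolding u_rel_def Let_def \<gamma>_def by auto
  have "i = i0"
  proof (rule ccontr)
    assume "i \<noteq> i0"
    then have "(i + 1, collen Y i - \<gamma>) \<in> Y" using path \<open>i \<le> i0\<close> by simp
    moreover have "collen Y i - \<gamma> = j" using col by simp
    ultimately have "(i + 1, j) \<in> Y" by simp
    then show False using assms young_mem_iff_less_rowlen[OF Y] by simp
  qed
  moreover have "j0 < collen Y i0" using box young_mem_iff_less_collen[OF Y] by simp
  ultimately show "(i, j) = (i0, j0)" using col \<gamma>_def by simp
next
  assume "(i, j) = (i0, j0)"
  then show "u_rel Y i0 j0 (i, collen Y i) (i, j)"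
    using assms(1) young_mem_iff_less_collen[OF Y] unfolding u_rel_def Let_def by auto
qed

end

lemma tangent_lex_eq_0:
  assumes Y: "young Y" and M: "M \<in> tangent_lex a b n Y"
    and d0: "\<And>s. s \<in> d_invariant a b n Y \<Longrightarrow> case_prod M (d_arrow Y s) = 0"
    and u0: "\<And>s. s \<in> u_invariant a b n Y \<Longrightarrow> case_prod M (u_arrow Y s) = 0"
  shows "M = 0"
proof -
  have MT: "M \<in> tangent_space a b n Y" and lex: "\<And>m k. M m k \<noteq> 0 \<Longrightarrow> k < m"
    using M unfolding tangent_lex_def by auto
  \<comment> \<open>At a non-invariant arrow M vanishes anyway, since M preserves colours.\<close>
  have "M (rowlen Y j, j) (i, collen Y i - 1) = 0" if "(i, j) \<in> Y" for i j
    using d0[of "(i, j)"] tangent_space_color[OF MT] that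
    unfolding d_invariant_def d_arrow_def by fastforce
  then have fst_less: "M m k = 0" if "fst k < fst m" for m k
    using tangent_space_eq_0_if_fst_less[OF Y MT _ that] by blast
  have "M (i, collen Y i) (i, j) = 0" if "(i, j) \<in> Y" and "i = rowlen Y j - 1" for i j
    using u0[of "(i, j)"] tangent_space_color[OF MT] that
    unfolding u_invariant_def u_arrow_def by fastforce
  then have fst_eq: "M m k = 0" if "fst k = fst m" for m k
    using tangent_space_eq_0_if_fst_eq[OF Y MT _ that] by blast
  show ?thesis
  proof (intro ext)
    fix m k
    show "M m k = 0 m k"
    proof (cases "M m k = 0")
      case False
      then have "fst k < fst m \<or> fst k = fst m" using lex less_prod_def' by blast
      then show ?thesis using fst_less fst_eq False by blast
    qed simp
  qed
qed

definition arrow :: "box set \<Rightarrow> box + box \<Rightarrow> box \<times> box" where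
  "arrow Y = case_sum (d_arrow Y) (u_arrow Y)"

definition arrow_matrix :: "box set \<Rightarrow> box + box \<Rightarrow> box \<Rightarrow> box \<Rightarrow> complex" where
  "arrow_matrix Y = case_sum (\<lambda>(i, j). rel_matrix (d_rel Y i j)) (\<lambda>(i, j). rel_matrix (u_rel Y i j))"

lemma arrow_matrix_at_arrow:
  assumes Y: "young Y"
    and s: "s \<in> d_invariant a b n Y <+> u_invariant a b n Y"
    and t: "t \<in> d_invariant a b n Y <+> u_invariant a b n Y"
  shows "case_prod (arrow_matrix Y s) (arrow Y t) = of_bool (s = t)"
proof -
  consider (dd) i0 j0 i j where "s = Inl (i0, j0)" "t = Inl (i, j)" "(i0, j0) \<in> Y" "(i, j) \<in> Y"
    | (du) i0 j0 i j where "s = Inl (i0, j0)" "t = Inr (i, j)" "(i0, j0) \<in> Y" "i = rowlen Y j - 1"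
    | (ud) i0 j0 i j where "s = Inr (i0, j0)" "t = Inl (i, j)" "(i, j) \<in> Y"
    | (uu) i0 j0 i j where "s = Inr (i0, j0)" "t = Inr (i, j)" "(i0, j0) \<in> Y" "i0 = rowlen Y j0 - 1"
        "(i, j) \<in> Y" "i = rowlen Y j - 1"
    using s t unfolding d_invariant_def u_invariant_def by fastforce
  then show ?thesis
  proof cases
    case dd
    then show ?thesis using d_rel_at_d_arrow[OF Y dd(3,4)]
      by (auto simp: arrow_def arrow_matrix_def rel_matrix_def d_arrow_def)
  next
    case du
    then have "\<not> d_rel Y i0 j0 (i, collen Y i) (rowlen Y j - 1, j)"
      using d_rel_fst_less[OF Y du(3)] by fastforce
    then show ?thesis using du by (simp add: arrow_def arrow_matrix_def rel_matrix_def u_arrow_def)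
  next
    case ud
    then have "\<not> u_rel Y i0 j0 (rowlen Y j, j) (i, collen Y i - 1)"
      using young_mem_iff_less_rowlen[OF Y] unfolding u_rel_def by auto
    then show ?thesis using ud by (simp add: arrow_def arrow_matrix_def rel_matrix_def d_arrow_def)
  next
    case uu
    then show ?thesis using u_rel_at_u_arrow[OF Y uu(3-6)]
      by (auto simp: arrow_def arrow_matrix_def rel_matrix_def u_arrow_def)
  qed
qed

lemma dim_tangent_lex:
  assumes Y: "young Y"
  shows "vector_space.dim mscale (tangent_lex a b n Y) = card (d_invariant a b n Y) + card (u_invariant a b n Y)"
proof -
  have "d_invariant a b n Y \<subseteq> Y" and "u_invariant a b n Y \<subseteq> Y"
    unfolding d_invariant_def u_invariant_def by auto
  then have fin: "finite (d_invariant a b n Y)" "finite (u_invariant a b n Y)"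
    using finite_subset young_finite[OF Y] by blast+
  have sub: "arrow_matrix Y ` (d_invariant a b n Y <+> u_invariant a b n Y) \<subseteq> tangent_lex a b n Y"
  proof (rule image_subsetI)
    fix t assume "t \<in> d_invariant a b n Y <+> u_invariant a b n Y"
    then consider (d) i j where "t = Inl (i, j)" and "(i, j) \<in> d_invariant a b n Y"
      | (u) i j where "t = Inr (i, j)" and "(i, j) \<in> u_invariant a b n Y"
      by fastforce
    then show "arrow_matrix Y t \<in> tangent_lex a b n Y"
    proof cases
      case d
      then show ?thesis using d_rel_mem_tangent_lex[OF Y, of i j]
        by (simp add: arrow_matrix_def d_invariant_def d_arrow_def)
    next
      case u
      then have "(i, j) \<in> Y" and "i = rowlen Y j - 1"
        and "color a b n (i, collen Y i) = color a b n (i, j)"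
        unfolding u_invariant_def u_arrow_def by auto
      from u_rel_mem_tangent_lex[OF Y this] show ?thesis
        using u(1) by (simp add: arrow_matrix_def)
    qed
  qed
  have zero: "M = 0" if M: "M \<in> tangent_lex a b n Y"
    and vanish: "\<And>t. t \<in> d_invariant a b n Y <+> u_invariant a b n Y \<Longrightarrow> case_prod M (arrow Y t) = 0"
    for M
  proof (rule tangent_lex_eq_0[OF Y M])
    show "case_prod M (d_arrow Y s) = 0" if "s \<in> d_invariant a b n Y" for s
      using vanish[OF InlI[OF that]] by (simp add: arrow_def)
    show "case_prod M (u_arrow Y s) = 0" if "s \<in> u_invariant a b n Y" for s
      using vanish[OF InrI[OF that]] by (simp add: arrow_def)
  qed
  have "vector_space.dim mscale (tangent_lex a b n Y)
      = card (d_invariant a b n Y <+> u_invariant a b n Y)"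
    using fin by (intro dim_eq_card_of_dual_family[OF _ subspace_tangent_lex sub
        arrow_matrix_at_arrow[OF Y] zero]) simp_all
  then show ?thesis using fin by (simp add: card_Plus)
qed

lemma inv_arrow_iff_color_eq:
  "inv_arrow a b n (int x1, int y1) (int x2, int y2) \<longleftrightarrow> color a b n (x1, y1) = color a b n (x2, y2)"
proof -
  have "a * (int x1 - int x2) + b * (int y1 - int y2) = (a * int x1 + b * int y1) - (a * int x2 + b * int y2)"
    by (simp add: algebra_simps)
  then show ?thesis unfolding inv_arrow_def color_def by (simp add: mod_eq_dvd_iff mod_eq_0_iff_dvd)
qed

lemma betti_eq_card_invariant:
  assumes Y: "young Y"
  shows "betti a b n Y = card (d_invariant a b n Y) + card (u_invariant a b n Y)"
proof -
  have d: "inv_arrow a b n (int (rowlen Y j), int j) (int i, int (collen Y i) - 1)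
      \<longleftrightarrow> color a b n (rowlen Y j, j) = color a b n (i, collen Y i - 1)" if "(i, j) \<in> Y" for i j
  proof -
    have "int (collen Y i) - 1 = int (collen Y i - 1)"
      using that young_mem_iff_less_collen[OF Y, of i j] by simp
    then show ?thesis by (simp only: inv_arrow_iff_color_eq)
  qed
  have u: "inv_arrow a b n (int i, int (collen Y i)) (int (rowlen Y j) - 1, int j) \<and> int i = int (rowlen Y j) - 1
      \<longleftrightarrow> i = rowlen Y j - 1 \<and> color a b n (i, collen Y i) = color a b n (i, j)" if "(i, j) \<in> Y" for i j
  proof -
    have eq: "int (rowlen Y j) - 1 = int (rowlen Y j - 1)"
      using that young_mem_iff_less_rowlen[OF Y, of i j] by simp
    have "inv_arrow a b n (int i, int (collen Y i)) (int (rowlen Y j) - 1, int j)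
        \<longleftrightarrow> color a b n (i, collen Y i) = color a b n (rowlen Y j - 1, j)"
      unfolding eq by (rule inv_arrow_iff_color_eq)
    moreover have "int i = int (rowlen Y j) - 1 \<longleftrightarrow> i = rowlen Y j - 1"
      unfolding eq by (rule of_nat_eq_iff)
    ultimately show ?thesis by auto
  qed
  have "{(i, j) \<in> Y. inv_arrow a b n (int (rowlen Y j), int j) (int i, int (collen Y i) - 1)}
      = d_invariant a b n Y"
    unfolding d_invariant_def using d by blast
  moreover have "{(i, j) \<in> Y. inv_arrow a b n (int i, int (collen Y i)) (int (rowlen Y j) - 1, int j)
      \<and> int i = int (rowlen Y j) - 1} = u_invariant a b n Y"
    unfolding u_invariant_def using u by blast
  ultimately show ?thesis unfolding betti_def by simp
qed

theorem proposition3p1: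
  fixes r n :: nat and a b :: int
  assumes "r \<ge> 1" and "n \<ge> 1" and "gcd a b = 1"
  shows "\<exists>N::int. \<forall>p q :: int. 0 < q \<and> N * q < p \<longrightarrow>
           (\<forall>Y \<in> Bset r a b n. cdim (tangent_pos a b n p q Y) = betti a b n Y)"
proof (intro exI allI impI ballI)
  fix p q :: int and Y
  assume pq: "0 < q \<and> int (r * n) * q < p" and "Y \<in> Bset r a b n"
  then have Y: "young Y" and "card Y = r * n" unfolding Bset_def by auto
  then have "tangent_pos a b n p q Y = tangent_lex a b n Y"
    using tangent_pos_eq_tangent_lex pq by simp
  then show "cdim (tangent_pos a b n p q Y) = betti a b n Y"
    unfolding cdim_def using dim_tangent_lex[OF Y] betti_eq_card_invariant[OF Y] by simp
qed

end
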